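(* Let $\tau$ be a $*$-stopping time. Then $\tau\wedge T\in L_G^{1^*}(\Omega)$ for each given $T>0$, and $\tau\in\mathcal{L}_G^{1^*_*}(\Omega)$.
   Context: $\Omega=C_0^d(\mathbb{R}^+)$ is the space of continuous paths $\omega:[0,\infty)\to\mathbb{R}^d$ with $\omega_0=0$, $B$ the canonical process, $\mathcal F_t=\sigma\{B_s:s\le t\}$, $\hat{\mathbb{E}}$ the $G$-expectation ($G$ a monotone sublinear function on $d\times d$ symmetric matrices). $L^1_G(\Omega)$ (resp. $L^1_G(\Omega_t)$) is the completion of bounded Lipschitz cylinder functions $\varphi(B_{t_1},\dots,B_{t_n})$ (resp. with $t_i\le t$) under $\hat{\mathbb{E}}[|\cdot|]$. $\mathcal{P}$ is a weakly compact set of probability measures representing $\hat{\mathbb{E}}$, $\hat{\mathbb{E}}[X]=\sup_{P\in\mathcal{P}}E_P[X]$ for Borel $X$, $c(A)=\sup_{P\in\mathcal{P}}P(A)$, q.s. = outside a capacity-zero set. $L^0(\Omega)$ (resp. $L^0(\Omega_t)$) are $\mathcal B(\Omega)$- (resp. $\mathcal F_t$-)measurable maps into $[-\infty,\infty]$; $\mathbb{L}^1(\cdot)$ those with $\hat{\mathbb{E}}[|X|]<\infty$. $L_G^{1^*}(\Omega)=\{X\in\mathbb{L}^1(\Omega):\exists X_n\in L^1_G(\Omega),X_n\downarrow X\text{ q.s.}\}$, $L_G^{1^*}(\Omega_t)=\{X\in\mathbb{L}^1(\Omega_t):\exists X_n\in L^1_G(\Omega_t),X_n\downarrow X\text{ q.s.}\}$;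 $\mathcal{L}_G^{1^*_*}(\Omega)=\{X\in L^0(\Omega):\exists X_n\in L_G^{1^*}(\Omega),X_n\uparrow X\text{ q.s.}\}$. A random time $\tau:\Omega\to[0,\infty)$ is a $*$-stopping time if $I_{\{\tau\ge t\}}\in L_G^{1^*}(\Omega_t)$ for each $t\ge0$. *)

theory Defs
  imports "HOL-Probability.Probability"
begin

text \<open>Paths \<open>\<omega> : [0,\<infinity>) \<rightarrow> R^d\<close>; represented as total functions on real,
  extended by 0 for negative times so that the representation is unique.\<close>
type_synonym 'd path = "real \<Rightarrow> real^'d"

definition Omega :: "'d::finite path set" where
  "Omega = {\<omega>. continuous_on {0..} \<omega> \<and> \<omega> 0 = 0 \<and> (\<forall>t<0. \<omega> t = 0)}"

definition canon :: "real \<Rightarrow> 'd::finite path \<Rightarrow> real^'d" where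
  "canon t \<omega> = \<omega> t"

text \<open>\<open>Filt S\<close>: the measurable space \<open>(\<Omega>, \<sigma>{B_s : s \<in> S})\<close>.
  \<open>F_t = Filt {0..t}\<close>, \<open>B(\<Omega>) = Filt {0..}\<close> (the Borel sets of \<Omega> coincide with
  the sigma-algebra generated by the coordinate maps).\<close>
definition Filt :: "real set \<Rightarrow> 'd::finite path measure" where
  "Filt S = sigma Omega {canon s -` A \<inter> Omega | s A. s \<in> S \<and> A \<in> sets borel}"

definition rep_family :: "'d::finite path measure set \<Rightarrow> bool" where
  "rep_family PP \<longleftrightarrow> PP \<noteq> {} \<and>
     (\<forall>P\<in>PP. prob_space P \<and> sets P = sets (Filt {0..}) \<and> space P = Omega)"

definition Ehat_abs :: "'d::finite path measure set \<Rightarrow> ('d path \<Rightarrow> ereal) \<Rightarrow> ennreal" where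
  "Ehat_abs PP X = (SUP P\<in>PP. \<integral>\<^sup>+ \<omega>. e2ennreal \<bar>X \<omega>\<bar> \<partial>P)"

definition cap :: "'d::finite path measure set \<Rightarrow> 'd path set \<Rightarrow> ennreal" where
  "cap PP A = (SUP P\<in>PP. emeasure P A)"

definition qs :: "'d::finite path measure set \<Rightarrow> ('d path \<Rightarrow> bool) \<Rightarrow> bool" where
  "qs PP Q \<longleftrightarrow> (\<exists>N \<in> sets (Filt {0..}). cap PP N = 0 \<and> (\<forall>\<omega>\<in>Omega - N. Q \<omega>))"

definition lip_cyl :: "real set \<Rightarrow> ('d::finite path \<Rightarrow> real) set" where
  "lip_cyl S = {X. \<exists>(ts::real list) (\<phi>::(real^'d) list \<Rightarrow> real) C L.
      set ts \<subseteq> S \<and>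
      (\<forall>xs. length xs = length ts \<longrightarrow> \<bar>\<phi> xs\<bar> \<le> C) \<and>
      (\<forall>xs ys. length xs = length ts \<longrightarrow> length ys = length ts \<longrightarrow>
          \<bar>\<phi> xs - \<phi> ys\<bar> \<le> L * (\<Sum>i<length ts. norm (xs!i - ys!i))) \<and>
      (\<forall>\<omega>\<in>Omega. X \<omega> = \<phi> (map (\<lambda>s. canon s \<omega>) ts))}"

definition L0 :: "real set \<Rightarrow> ('d::finite path \<Rightarrow> ereal) set" where
  "L0 S = borel_measurable (Filt S)"

definition LL1 :: "'d::finite path measure set \<Rightarrow> real set \<Rightarrow> ('d path \<Rightarrow> ereal) set" where
  "LL1 PP S = {X \<in> L0 S. Ehat_abs PP X < \<infinity>}"

text \<open>\<open>L^1_G\<close> (with cylinder times in S): the completion of \<open>lip_cyl S\<close> under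
  \<open>\<hat>E[|\<cdot>|]\<close>, realised inside \<open>L^0(\<Omega>)\<close>.\<close>
definition L1G :: "'d::finite path measure set \<Rightarrow> real set \<Rightarrow> ('d path \<Rightarrow> ereal) set" where
  "L1G PP S = {X \<in> L0 {0..}. \<exists>Xn. (\<forall>n. Xn n \<in> lip_cyl S) \<and>
      (\<lambda>n. Ehat_abs PP (\<lambda>\<omega>. X \<omega> - ereal (Xn n \<omega>))) \<longlonglongrightarrow> 0}"

definition dec_qs :: "'d::finite path measure set \<Rightarrow> (nat \<Rightarrow> 'd path \<Rightarrow> ereal) \<Rightarrow> ('d path \<Rightarrow> ereal) \<Rightarrow> bool" where
  "dec_qs PP Xn X \<longleftrightarrow> qs PP (\<lambda>\<omega>. (\<forall>n. Xn (Suc n) \<omega> \<le> Xn n \<omega>) \<and> (\<lambda>n. Xn n \<omega>) \<longlonglongrightarrow> X \<omega>)"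

definition inc_qs :: "'d::finite path measure set \<Rightarrow> (nat \<Rightarrow> 'd path \<Rightarrow> ereal) \<Rightarrow> ('d path \<Rightarrow> ereal) \<Rightarrow> bool" where
  "inc_qs PP Xn X \<longleftrightarrow> qs PP (\<lambda>\<omega>. (\<forall>n. Xn n \<omega> \<le> Xn (Suc n) \<omega>) \<and> (\<lambda>n. Xn n \<omega>) \<longlonglongrightarrow> X \<omega>)"

definition L1G_star :: "'d::finite path measure set \<Rightarrow> real set \<Rightarrow> ('d path \<Rightarrow> ereal) set" where
  "L1G_star PP S = {X \<in> LL1 PP S. \<exists>Xn. (\<forall>n. Xn n \<in> L1G PP S) \<and> dec_qs PP Xn X}"

definition L1G_starstar :: "'d::finite path measure set \<Rightarrow> ('d path \<Rightarrow> ereal) set" where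
  "L1G_starstar PP = {X \<in> L0 {0..}. \<exists>Xn. (\<forall>n. Xn n \<in> L1G_star PP {0..}) \<and> inc_qs PP Xn X}"

definition star_stopping_time :: "'d::finite path measure set \<Rightarrow> ('d path \<Rightarrow> real) \<Rightarrow> bool" where
  "star_stopping_time PP \<tau> \<longleftrightarrow> (\<forall>\<omega>\<in>Omega. 0 \<le> \<tau> \<omega>) \<and>
     (\<forall>t\<ge>0. (\<lambda>\<omega>. if t \<le> \<tau> \<omega> then (1::ereal) else 0) \<in> L1G_star PP {0..t})"

end

theory Submission
  imports Defs
begin

text \<open>The indicators \<open>I_{\<tau>\<ge>t}\<close> are decreasing quasi-sure limits of elements of \<open>L^1_G\<close>,
  and \<open>\<tau> \<and> T\<close> is approximated from above by the dyadic Riemann sums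
  \<open>\<Sum>_{k<2^n} T 2^{-n} I_{\<tau> \<ge> k T 2^{-n}}\<close>. Since \<open>L^1_G\<close> is closed under nonnegative linear
  combinations and finite minima, a diagonal sequence \<open>W_m = min_{n\<le>m} V_{n,m}\<close> of the
  approximants \<open>V_{n,m}\<close> of these Riemann sums decreases quasi-surely to \<open>\<tau> \<and> T\<close>.
  Finally \<open>\<tau>\<close> is the increasing limit of \<open>\<tau> \<and> n\<close>.\<close>

lemma space_Filt [simp]: "space (Filt S) = Omega"
  unfolding Filt_def by (rule space_measure_of) auto

lemma sets_Filt: "sets (Filt S) = sigma_sets Omega {canon s -` A \<inter> Omega | s A. s \<in> S \<and> A \<in> sets borel}"
  unfolding Filt_def by (rule sets_measure_of) auto

lemma sets_Filt_mono: "S \<subseteq> S' \<Longrightarrow> sets (Filt S) \<subseteq> sets (Filt S')"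
  unfolding sets_Filt by (auto intro!: sigma_sets_mono')

lemma L0_mono: "S \<subseteq> S' \<Longrightarrow> L0 S \<subseteq> L0 S'"
  unfolding L0_def by (rule measurable_mono) (auto simp: sets_Filt_mono)

lemma measurable_coordinate [measurable]:
  fixes i :: "'d::finite"
  shows "(\<lambda>\<omega>. \<omega> s $ i) \<in> borel_measurable (Filt {0..})"
proof -
  have "(\<lambda>\<omega>::'d path. \<omega> s) \<in> borel_measurable (Filt {0..})"
  proof (cases "0 \<le> s")
    case True
    show ?thesis
    proof (rule measurableI)
      fix A :: "(real^'d) set" assume "A \<in> sets borel"
      then have "canon s -` A \<inter> Omega \<in> sets (Filt {0..})"
        unfolding sets_Filt using True by (intro sigma_sets.Basic) blast
      then show "(\<lambda>\<omega>. \<omega> s) -` A \<inter> space (Filt {0..}) \<in> sets (Filt {0..})"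
        by (simp add: canon_def[abs_def])
    qed auto
  next
    case False
    then have "\<And>\<omega>. \<omega> \<in> space (Filt {0..}) \<Longrightarrow> \<omega> s = (0::real^'d)"
      by (auto simp: Omega_def)
    then show ?thesis by (subst measurable_cong[where g="\<lambda>_. 0"]) auto
  qed
  then show ?thesis
    by (rule measurable_compose) (intro borel_measurable_continuous_onI continuous_intros)
qed

lemma floor_scaled_approx: "m > 0 \<Longrightarrow> \<bar>real_of_int \<lfloor>m * x\<rfloor> / m - x\<bar> \<le> 1 / m" for m x :: real
proof -
  assume m: "m > 0"
  have fl: "real_of_int \<lfloor>m * x\<rfloor> \<le> m * x" "m * x < real_of_int \<lfloor>m * x\<rfloor> + 1"
    by linarith+
  have "real_of_int \<lfloor>m * x\<rfloor> / m \<le> x" using fl m by (simp add: divide_le_eq mult.commute)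
  moreover have "(m * x - 1) / m < real_of_int \<lfloor>m * x\<rfloor> / m" using fl m
    by (intro divide_strict_right_mono) auto
  moreover have "(m * x - 1) / m = x - 1 / m" using m by (simp add: field_simps)
  ultimately show ?thesis by simp
qed

lemma norm_floor_grid_approx:
  fixes x :: "real^'d::finite"
  assumes "k > 0"
  shows "norm ((\<chi> i. real_of_int \<lfloor>real k * x $ i\<rfloor> / real k) - x) \<le> real CARD('d) / real k"
proof -
  have "norm ((\<chi> i. real_of_int \<lfloor>real k * x $ i\<rfloor> / real k) - x)
      \<le> (\<Sum>i\<in>UNIV. \<bar>real_of_int \<lfloor>real k * x $ i\<rfloor> / real k - x $ i\<bar>)"
    using norm_le_l1_cart by (metis (no_types, lifting) sum.cong vec_lambda_beta vector_minus_component)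
  also have "\<dots> \<le> (\<Sum>i\<in>(UNIV::'d set). 1 / real k)"
    using floor_scaled_approx[of "real k"] assms by (intro sum_mono) simp
  finally show ?thesis by simp
qed

text \<open>A cylinder function is the pointwise limit of the functions obtained by rounding the path
  values to the grid \<open>\<int>^d / k\<close>; these factor through a countable space.\<close>

lemma borel_measurable_lip_cyl:
  assumes "f \<in> lip_cyl S"
  shows "f \<in> borel_measurable (Filt {0..})"
proof -
  obtain ts \<phi> L where
    lip: "\<forall>xs ys. length xs = length ts \<longrightarrow> length ys = length ts \<longrightarrow>
          \<bar>\<phi> xs - \<phi> ys\<bar> \<le> L * (\<Sum>i<length ts. norm (xs!i - ys!i))"
    and rep: "\<forall>\<omega>\<in>Omega. f \<omega> = \<phi> (map (\<lambda>s. canon s \<omega>) ts)"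
    using assms unfolding lip_cyl_def by blast
  define rnd where "rnd k \<omega> = map (\<lambda>s i. \<lfloor>real k * \<omega> s $ i\<rfloor>) ts" for k and \<omega> :: "'a path"
  define grid where "grid k a = (\<chi> i. real_of_int (a i) / real k)" for k and a :: "'a \<Rightarrow> int"
  define g where "g k \<omega> = \<phi> (map (grid (Suc k)) (rnd (Suc k) \<omega>))" for k \<omega>
  have "rnd k \<in> measurable (Filt {0..}) (count_space UNIV)" for k
  proof (subst measurable_count_space_eq2_countable, safe)
    fix a :: "('a \<Rightarrow> int) list"
    have "rnd k -` {a} \<inter> space (Filt {0..}) = {\<omega> \<in> space (Filt {0..}). length a = length ts \<and>
       (\<forall>j<length ts. \<forall>i. \<lfloor>real k * \<omega> (ts!j) $ i\<rfloor> = (a!j) i)}"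
      by (auto simp: rnd_def list_eq_iff_nth_eq)
    also have "\<dots> \<in> sets (Filt {0..})"
      by measurable
    finally show "rnd k -` {a} \<inter> space (Filt {0..}) \<in> sets (Filt {0..})" .
  qed simp
  then have gm: "g k \<in> borel_measurable (Filt {0..})" for k
    unfolding g_def by (rule measurable_compose) simp
  have "(\<lambda>k. g k \<omega>) \<longlonglongrightarrow> f \<omega>" if "\<omega> \<in> Omega" for \<omega>
  proof -
    let ?c = "\<bar>L\<bar> * (real (length ts) * real CARD('a))"
    have bound: "\<bar>g k \<omega> - f \<omega>\<bar> \<le> ?c / real (Suc k)" for k
    proof -
      let ?d = "\<Sum>i<length ts. norm (map (grid (Suc k)) (rnd (Suc k) \<omega>) ! i - map (\<lambda>s. canon s \<omega>) ts ! i)"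
      have "\<bar>g k \<omega> - f \<omega>\<bar> \<le> L * ?d"
        unfolding g_def rep[rule_format, OF that] by (rule lip[rule_format]) (simp_all add: rnd_def)
      also have "\<dots> \<le> \<bar>L\<bar> * ?d"
        by (intro mult_right_mono sum_nonneg) auto
      also have "\<dots> \<le> \<bar>L\<bar> * (\<Sum>i<length ts. real CARD('a) / real (Suc k))"
        using norm_floor_grid_approx[of "Suc k"]
        by (intro mult_left_mono sum_mono) (auto simp: rnd_def grid_def canon_def)
      finally show ?thesis by simp
    qed
    have "(\<lambda>k. g k \<omega> - f \<omega>) \<longlonglongrightarrow> 0"
    proof (rule Lim_null_comparison)
      show "\<forall>\<^sub>F k in sequentially. norm (g k \<omega> - f \<omega>) \<le> ?c / real (Suc k)"
        using bound by simp
      show "(\<lambda>k. ?c / real (Suc k)) \<longlonglongrightarrow> 0"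
        using LIMSEQ_Suc[OF lim_const_over_n[of ?c]] by simp
    qed
    then show ?thesis by (rule LIM_zero_cancel)
  qed
  then show ?thesis by (intro borel_measurable_LIMSEQ_real[OF _ gm]) simp
qed

lemma sum_lessThan_add: "(\<Sum>i<m + n. f i) = (\<Sum>i<m. f i) + (\<Sum>i<n. f (m + i))"
  for f :: "nat \<Rightarrow> 'a::comm_monoid_add"
  by (induct n) (auto simp: add.assoc)

lemma lip_cyl_compose2:
  fixes f g :: "'d::finite path \<Rightarrow> real" and F :: "real \<Rightarrow> real \<Rightarrow> real"
  assumes "f \<in> lip_cyl S" "g \<in> lip_cyl S" "c \<ge> 0"
    and F: "\<And>a b a' b'. \<bar>F a b - F a' b'\<bar> \<le> c * (\<bar>a - a'\<bar> + \<bar>b - b'\<bar>)"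
  shows "(\<lambda>\<omega>. F (f \<omega>) (g \<omega>)) \<in> lip_cyl S"
proof -
  obtain ts1 \<phi>1 C1 L1 where S1: "set ts1 \<subseteq> S" and B1: "\<forall>xs. length xs = length ts1 \<longrightarrow> \<bar>\<phi>1 xs\<bar> \<le> C1"
    and lip1: "\<forall>xs ys. length xs = length ts1 \<longrightarrow> length ys = length ts1 \<longrightarrow>
          \<bar>\<phi>1 xs - \<phi>1 ys\<bar> \<le> L1 * (\<Sum>i<length ts1. norm (xs!i - ys!i))"
    and rep1: "\<forall>\<omega>\<in>Omega. f \<omega> = \<phi>1 (map (\<lambda>s. canon s \<omega>) ts1)"
    using assms(1) unfolding lip_cyl_def by blast
  obtain ts2 \<phi>2 C2 L2 where S2: "set ts2 \<subseteq> S" and B2: "\<forall>xs. length xs = length ts2 \<longrightarrow> \<bar>\<phi>2 xs\<bar> \<le> C2"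
    and lip2: "\<forall>xs ys. length xs = length ts2 \<longrightarrow> length ys = length ts2 \<longrightarrow>
          \<bar>\<phi>2 xs - \<phi>2 ys\<bar> \<le> L2 * (\<Sum>i<length ts2. norm (xs!i - ys!i))"
    and rep2: "\<forall>\<omega>\<in>Omega. g \<omega> = \<phi>2 (map (\<lambda>s. canon s \<omega>) ts2)"
    using assms(2) unfolding lip_cyl_def by blast
  define n1 where "n1 = length ts1"
  define \<phi> where "\<phi> xs = F (\<phi>1 (take n1 xs)) (\<phi>2 (drop n1 xs))" for xs :: "(real^'d) list"
  define M where "M = max (max L1 L2) 0"
  have "\<bar>\<phi> xs\<bar> \<le> \<bar>F 0 0\<bar> + c * (C1 + C2)" if "length xs = length (ts1 @ ts2)" for xs
  proof -
    have "\<bar>\<phi> xs - F 0 0\<bar> \<le> c * (\<bar>\<phi>1 (take n1 xs)\<bar> + \<bar>\<phi>2 (drop n1 xs)\<bar>)"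
      using F[of "\<phi>1 (take n1 xs)" "\<phi>2 (drop n1 xs)" 0 0] by (simp add: \<phi>_def)
    also have "\<dots> \<le> c * (C1 + C2)"
      using B1 B2 that assms(3) by (intro mult_left_mono add_mono) (auto simp: n1_def)
    finally show ?thesis by linarith
  qed
  moreover have "\<bar>\<phi> xs - \<phi> ys\<bar> \<le> (c * M) * (\<Sum>i<length (ts1 @ ts2). norm (xs!i - ys!i))"
    if lx: "length xs = length (ts1 @ ts2)" and ly: "length ys = length (ts1 @ ts2)" for xs ys
  proof -
    define s1 where "s1 = (\<Sum>i<n1. norm (xs!i - ys!i))"
    define s2 where "s2 = (\<Sum>i<length ts2. norm (xs!(n1+i) - ys!(n1+i)))"
    have "\<bar>\<phi>1 (take n1 xs) - \<phi>1 (take n1 ys)\<bar> \<le> L1 * s1"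
      using lip1[rule_format, of "take n1 xs" "take n1 ys"] lx ly by (simp add: n1_def s1_def)
    moreover have "\<bar>\<phi>2 (drop n1 xs) - \<phi>2 (drop n1 ys)\<bar> \<le> L2 * s2"
      using lip2[rule_format, of "drop n1 xs" "drop n1 ys"] lx ly by (simp add: n1_def s2_def)
    moreover have "L1 * s1 \<le> M * s1" "L2 * s2 \<le> M * s2"
      unfolding M_def s1_def s2_def by (auto intro!: mult_right_mono sum_nonneg)
    ultimately have "\<bar>\<phi>1 (take n1 xs) - \<phi>1 (take n1 ys)\<bar> + \<bar>\<phi>2 (drop n1 xs) - \<phi>2 (drop n1 ys)\<bar>
        \<le> M * s1 + M * s2"
      by linarith
    then have "\<bar>\<phi> xs - \<phi> ys\<bar> \<le> c * (M * s1 + M * s2)"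
      unfolding \<phi>_def using F assms(3) by (meson mult_left_mono order_trans)
    also have "M * s1 + M * s2 = M * (\<Sum>i<length (ts1 @ ts2). norm (xs!i - ys!i))"
      unfolding s1_def s2_def n1_def by (simp add: sum_lessThan_add distrib_left)
    finally show ?thesis by (simp add: mult.assoc)
  qed
  moreover have "\<forall>\<omega>\<in>Omega. F (f \<omega>) (g \<omega>) = \<phi> (map (\<lambda>s. canon s \<omega>) (ts1 @ ts2))"
    using rep1 rep2 by (simp add: \<phi>_def n1_def)
  moreover have "set (ts1 @ ts2) \<subseteq> S" using S1 S2 by auto
  ultimately show ?thesis unfolding lip_cyl_def by blast
qed

lemma lip_cyl_const: "(\<lambda>_. r) \<in> lip_cyl S"
  unfolding lip_cyl_def
  by (rule CollectI, rule exI[of _ "[]"], rule exI[of _ "\<lambda>_. r"], rule exI[of _ "\<bar>r\<bar>"], rule exI[of _ 0]) auto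

lemma lip_cyl_mono: "S \<subseteq> S' \<Longrightarrow> lip_cyl S \<subseteq> lip_cyl S'"
  unfolding lip_cyl_def by blast

lemma e2ennreal_add: "0 \<le> x \<Longrightarrow> 0 \<le> y \<Longrightarrow> e2ennreal (x + y) = e2ennreal x + e2ennreal y"
  by (cases x; cases y) (auto simp: ennreal_plus)

lemma e2ennreal_mult_ereal: "0 \<le> a \<Longrightarrow> 0 \<le> x \<Longrightarrow> e2ennreal (ereal a * x) = ennreal a * e2ennreal x"
  by (cases x; cases "a = 0") (auto simp: ennreal_mult ennreal_mult_top)

lemma rep_familyD:
  "rep_family PP \<Longrightarrow> P \<in> PP \<Longrightarrow> prob_space P \<and> sets P = sets (Filt {0..}) \<and> space P = Omega"
  unfolding rep_family_def by blast

lemma Ehat_abs_le_lincomb: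
  fixes F G H :: "'d::finite path \<Rightarrow> ereal"
  assumes rep: "rep_family PP"
    and G: "G \<in> borel_measurable (Filt {0..})" and H: "H \<in> borel_measurable (Filt {0..})"
    and "a \<ge> 0" "b \<ge> 0"
    and le: "\<And>\<omega>. \<omega> \<in> Omega \<Longrightarrow> \<bar>F \<omega>\<bar> \<le> ereal a * \<bar>G \<omega>\<bar> + ereal b * \<bar>H \<omega>\<bar>"
  shows "Ehat_abs PP F \<le> ennreal a * Ehat_abs PP G + ennreal b * Ehat_abs PP H"
  unfolding Ehat_abs_def
proof (rule SUP_least)
  fix P assume P: "P \<in> PP"
  have sP: "sets P = sets (Filt {0..})" "space P = Omega" using rep_familyD[OF rep P] by auto
  have GH: "G \<in> borel_measurable P" "H \<in> borel_measurable P"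
    using G H measurable_cong_sets[OF sP(1) refl] by auto
  have "(\<integral>\<^sup>+ \<omega>. e2ennreal \<bar>F \<omega>\<bar> \<partial>P)
      \<le> (\<integral>\<^sup>+ \<omega>. ennreal a * e2ennreal \<bar>G \<omega>\<bar> + ennreal b * e2ennreal \<bar>H \<omega>\<bar> \<partial>P)"
  proof (rule nn_integral_mono)
    fix \<omega> assume "\<omega> \<in> space P"
    then have "e2ennreal \<bar>F \<omega>\<bar> \<le> e2ennreal (ereal a * \<bar>G \<omega>\<bar> + ereal b * \<bar>H \<omega>\<bar>)"
      using le sP by (intro e2ennreal_mono) auto
    also have "\<dots> = ennreal a * e2ennreal \<bar>G \<omega>\<bar> + ennreal b * e2ennreal \<bar>H \<omega>\<bar>"
      using assms(4,5) by (simp add: e2ennreal_add e2ennreal_mult_ereal)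
    finally show "e2ennreal \<bar>F \<omega>\<bar> \<le> ennreal a * e2ennreal \<bar>G \<omega>\<bar> + ennreal b * e2ennreal \<bar>H \<omega>\<bar>" .
  qed
  also have "\<dots> = ennreal a * (\<integral>\<^sup>+ \<omega>. e2ennreal \<bar>G \<omega>\<bar> \<partial>P) + ennreal b * (\<integral>\<^sup>+ \<omega>. e2ennreal \<bar>H \<omega>\<bar> \<partial>P)"
    using GH by (simp add: nn_integral_add nn_integral_cmult)
  also have "\<dots> \<le> ennreal a * (SUP P\<in>PP. \<integral>\<^sup>+ \<omega>. e2ennreal \<bar>G \<omega>\<bar> \<partial>P)
                 + ennreal b * (SUP P\<in>PP. \<integral>\<^sup>+ \<omega>. e2ennreal \<bar>H \<omega>\<bar> \<partial>P)"
    using P by (intro add_mono mult_left_mono SUP_upper) auto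
  finally show "(\<integral>\<^sup>+ \<omega>. e2ennreal \<bar>F \<omega>\<bar> \<partial>P) \<le> \<dots>" .
qed

lemma Ehat_abs_le_bound:
  assumes rep: "rep_family PP" and bound: "\<And>\<omega>. \<omega> \<in> Omega \<Longrightarrow> \<bar>X \<omega>\<bar> \<le> ereal C"
  shows "Ehat_abs PP X \<le> ennreal C"
  unfolding Ehat_abs_def
proof (rule SUP_least)
  fix P assume P: "P \<in> PP"
  have "prob_space P" "space P = Omega" using rep_familyD[OF rep P] by auto
  have "(\<integral>\<^sup>+ \<omega>. e2ennreal \<bar>X \<omega>\<bar> \<partial>P) \<le> (\<integral>\<^sup>+ \<omega>. ennreal C \<partial>P)"
    using bound \<open>space P = Omega\<close> by (intro nn_integral_mono) (metis e2ennreal_ereal e2ennreal_mono)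
  also have "\<dots> = ennreal C" using prob_space.emeasure_space_1[OF \<open>prob_space P\<close>] by simp
  finally show "(\<integral>\<^sup>+ \<omega>. e2ennreal \<bar>X \<omega>\<bar> \<partial>P) \<le> ennreal C" .
qed

lemma cap_eq_0_iff: "cap PP N = 0 \<longleftrightarrow> (\<forall>P\<in>PP. emeasure P N = 0)"
  unfolding cap_def bot_ennreal[symmetric] by simp

lemma qs_mono: "qs PP Q \<Longrightarrow> (\<And>\<omega>. \<omega> \<in> Omega \<Longrightarrow> Q \<omega> \<Longrightarrow> R \<omega>) \<Longrightarrow> qs PP R"
  unfolding qs_def by blast

lemma qs_everywhere: "(\<And>\<omega>. \<omega> \<in> Omega \<Longrightarrow> Q \<omega>) \<Longrightarrow> qs PP Q"
  unfolding qs_def by (intro bexI[of _ "{}"]) (auto simp: cap_eq_0_iff)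

lemma qs_countable_all:
  assumes rep: "rep_family PP" and "countable I" and q: "\<And>i. i \<in> I \<Longrightarrow> qs PP (Q i)"
  shows "qs PP (\<lambda>\<omega>. \<forall>i\<in>I. Q i \<omega>)"
proof -
  obtain N where N: "\<And>i. i \<in> I \<Longrightarrow> N i \<in> sets (Filt {0..})" "\<And>i. i \<in> I \<Longrightarrow> cap PP (N i) = 0"
    "\<And>i. i \<in> I \<Longrightarrow> \<forall>\<omega>\<in>Omega - N i. Q i \<omega>"
    using q unfolding qs_def by metis
  have "(\<Union>i\<in>I. N i) \<in> sets (Filt {0..})"
    using N(1) \<open>countable I\<close> by (intro sets.countable_UN') auto
  moreover have "cap PP (\<Union>i\<in>I. N i) = 0"
    unfolding cap_eq_0_iff
  proof
    fix P assume P: "P \<in> PP"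
    have "sets P = sets (Filt {0..})" using rep_familyD[OF rep P] by auto
    then have "(\<Union>i\<in>I. N i) \<in> null_sets P"
      using N(1,2) P \<open>countable I\<close> by (intro null_sets_UN') (auto simp: cap_eq_0_iff)
    then show "emeasure P (\<Union>i\<in>I. N i) = 0" by auto
  qed
  moreover have "\<forall>\<omega>\<in>Omega - (\<Union>i\<in>I. N i). \<forall>i\<in>I. Q i \<omega>" using N(3) by blast
  ultimately show ?thesis unfolding qs_def by blast
qed

lemma qs_conj:
  assumes rep: "rep_family PP" and "qs PP Q" "qs PP R"
  shows "qs PP (\<lambda>\<omega>. Q \<omega> \<and> R \<omega>)"
proof -
  have "qs PP (\<lambda>\<omega>. \<forall>b\<in>UNIV. if b then Q \<omega> else R \<omega>)"
  proof (rule qs_countable_all[OF rep])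
    show "qs PP (\<lambda>\<omega>. if b then Q \<omega> else R \<omega>)" for b
      using assms by (cases b) simp_all
  qed simp
  then show ?thesis by (rule qs_mono) (metis (full_types) UNIV_I)
qed

subsection \<open>Closure properties of \<open>L^1_G\<close>\<close>

text \<open>\<open>Fr\<close> is the real-valued counterpart of \<open>F\<close>: applied to the cylinder approximations of
  \<open>X\<close> and \<open>Y\<close>, it yields cylinder approximations of \<open>F X Y\<close>.\<close>

lemma L1G_compose2:
  fixes X Y :: "'d::finite path \<Rightarrow> ereal" and F :: "ereal \<Rightarrow> ereal \<Rightarrow> ereal"
  assumes rep: "rep_family PP" and X: "X \<in> L1G PP S" and Y: "Y \<in> L1G PP S"
    and FXY: "(\<lambda>\<omega>. F (X \<omega>) (Y \<omega>)) \<in> L0 {0..}"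
    and c: "c \<ge> 0"
    and F: "\<And>x y u v. \<bar>F x y - ereal (Fr u v)\<bar> \<le> ereal c * \<bar>x - ereal u\<bar> + ereal c * \<bar>y - ereal v\<bar>"
    and Fr: "\<And>a b a' b'. \<bar>Fr a b - Fr a' b'\<bar> \<le> c * (\<bar>a - a'\<bar> + \<bar>b - b'\<bar>)"
  shows "(\<lambda>\<omega>. F (X \<omega>) (Y \<omega>)) \<in> L1G PP S"
proof -
  obtain Xn where Xn: "\<And>n. Xn n \<in> lip_cyl S" and Xm: "X \<in> L0 {0..}"
    and Xc: "(\<lambda>n. Ehat_abs PP (\<lambda>\<omega>. X \<omega> - ereal (Xn n \<omega>))) \<longlonglongrightarrow> 0"
    using X unfolding L1G_def by blast
  obtain Yn where Yn: "\<And>n. Yn n \<in> lip_cyl S" and Ym: "Y \<in> L0 {0..}"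
    and Yc: "(\<lambda>n. Ehat_abs PP (\<lambda>\<omega>. Y \<omega> - ereal (Yn n \<omega>))) \<longlonglongrightarrow> 0"
    using Y unfolding L1G_def by blast
  let ?err = "\<lambda>n. ennreal c * Ehat_abs PP (\<lambda>\<omega>. X \<omega> - ereal (Xn n \<omega>))
                  + ennreal c * Ehat_abs PP (\<lambda>\<omega>. Y \<omega> - ereal (Yn n \<omega>))"
  have bound: "Ehat_abs PP (\<lambda>\<omega>. F (X \<omega>) (Y \<omega>) - ereal (Fr (Xn n \<omega>) (Yn n \<omega>))) \<le> ?err n" for n
  proof (rule Ehat_abs_le_lincomb[OF rep _ _ c c])
    show "(\<lambda>\<omega>. X \<omega> - ereal (Xn n \<omega>)) \<in> borel_measurable (Filt {0..})"
      using Xm borel_measurable_lip_cyl[OF Xn] unfolding L0_def by measurable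
    show "(\<lambda>\<omega>. Y \<omega> - ereal (Yn n \<omega>)) \<in> borel_measurable (Filt {0..})"
      using Ym borel_measurable_lip_cyl[OF Yn] unfolding L0_def by measurable
  qed (rule F)
  have "?err \<longlonglongrightarrow> ennreal c * 0 + ennreal c * 0"
    by (rule tendsto_add[OF ennreal_tendsto_cmult[OF _ Xc] ennreal_tendsto_cmult[OF _ Yc]]) simp_all
  then have err: "?err \<longlonglongrightarrow> 0" by simp
  have "(\<lambda>n. Ehat_abs PP (\<lambda>\<omega>. F (X \<omega>) (Y \<omega>) - ereal (Fr (Xn n \<omega>) (Yn n \<omega>)))) \<longlonglongrightarrow> 0"
  proof (rule tendsto_sandwich[OF _ _ tendsto_const err])
    show "\<forall>\<^sub>F n in sequentially. 0 \<le> Ehat_abs PP (\<lambda>\<omega>. F (X \<omega>) (Y \<omega>) - ereal (Fr (Xn n \<omega>) (Yn n \<omega>)))"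
      by simp
  qed (use bound in simp)
  moreover have "(\<lambda>\<omega>. Fr (Xn n \<omega>) (Yn n \<omega>)) \<in> lip_cyl S" for n
    by (rule lip_cyl_compose2[OF Xn Yn c Fr])
  ultimately show ?thesis
    unfolding L1G_def using FXY by (intro CollectI conjI exI[of _ "\<lambda>n \<omega>. Fr (Xn n \<omega>) (Yn n \<omega>)"]) auto
qed

lemma L1G_add:
  "rep_family PP \<Longrightarrow> X \<in> L1G PP S \<Longrightarrow> Y \<in> L1G PP S \<Longrightarrow> (\<lambda>\<omega>. X \<omega> + Y \<omega>) \<in> L1G PP S"
proof (rule L1G_compose2[where F="(+)" and Fr="(+)" and c=1])
  show "\<bar>x + y - ereal (u + v)\<bar> \<le> ereal 1 * \<bar>x - ereal u\<bar> + ereal 1 * \<bar>y - ereal v\<bar>" for x y u v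
    by (cases x; cases y) auto
qed (auto simp: L0_def L1G_def)

lemma L1G_min:
  "rep_family PP \<Longrightarrow> X \<in> L1G PP S \<Longrightarrow> Y \<in> L1G PP S \<Longrightarrow> (\<lambda>\<omega>. min (X \<omega>) (Y \<omega>)) \<in> L1G PP S"
proof (rule L1G_compose2[where F=min and Fr=min and c=1])
  show "\<bar>min x y - ereal (min u v)\<bar> \<le> ereal 1 * \<bar>x - ereal u\<bar> + ereal 1 * \<bar>y - ereal v\<bar>" for x y u v
    by (cases x; cases y) (auto simp: min_def)
qed (auto simp: L0_def L1G_def min_def)

lemma L1G_cmult:
  assumes "rep_family PP" "X \<in> L1G PP S" "r \<ge> 0"
  shows "(\<lambda>\<omega>. ereal r * X \<omega>) \<in> L1G PP S"
proof (rule L1G_compose2[where Y=X and F="\<lambda>x y. ereal r * x" and Fr="\<lambda>u v. r * u" and c=r])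
  fix x y :: ereal and u v :: real
  have "\<bar>ereal r * x - ereal (r * u)\<bar> = ereal r * \<bar>x - ereal u\<bar>"
  proof (cases x)
    case (real a) then show ?thesis using \<open>r \<ge> 0\<close> by (simp add: abs_mult right_diff_distrib[symmetric])
  qed (use \<open>r \<ge> 0\<close> in \<open>cases "r = 0"; auto\<close>)+
  then show "\<bar>ereal r * x - ereal (r * u)\<bar> \<le> ereal r * \<bar>x - ereal u\<bar> + ereal r * \<bar>y - ereal v\<bar>"
    using \<open>r \<ge> 0\<close> by (simp add: add_increasing2)
qed (use assms in \<open>auto simp: L0_def L1G_def abs_mult right_diff_distrib[symmetric] intro: mult_left_mono\<close>)

lemma L1G_zero: "(\<lambda>_. 0) \<in> L1G PP S"
proof -
  have "Ehat_abs PP (\<lambda>_. 0) = 0"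
    unfolding Ehat_abs_def by (cases "PP = {}") (simp_all add: bot_ennreal)
  then show ?thesis
    unfolding L1G_def L0_def by (auto intro!: exI[of _ "\<lambda>_ _. 0"] lip_cyl_const simp: zero_ereal_def)
qed

lemma L1G_mono: "S \<subseteq> S' \<Longrightarrow> L1G PP S \<subseteq> L1G PP S'"
  unfolding L1G_def using lip_cyl_mono by blast

lemma L1G_sum:
  assumes "rep_family PP" "finite A" "\<And>k. k \<in> A \<Longrightarrow> X k \<in> L1G PP S"
  shows "(\<lambda>\<omega>. \<Sum>k\<in>A. X k \<omega>) \<in> L1G PP S"
  using assms(2,3)
proof (induct A rule: finite_induct)
  case empty then show ?case using L1G_zero by simp
next
  case (insert a A)
  then show ?case using L1G_add[OF assms(1), of "X a" S "\<lambda>\<omega>. \<Sum>k\<in>A. X k \<omega>"] by simp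
qed

lemma L1G_INF:
  assumes "rep_family PP" "finite A" "A \<noteq> {}" "\<And>k. k \<in> A \<Longrightarrow> X k \<in> L1G PP S"
  shows "(\<lambda>\<omega>. INF k\<in>A. X k \<omega>) \<in> L1G PP S"
  using assms(2-4)
proof (induct A rule: finite_ne_induct)
  case (singleton a) then show ?case by simp
next
  case (insert a A)
  then show ?case
    using L1G_min[OF assms(1), of "X a" S "\<lambda>\<omega>. INF k\<in>A. X k \<omega>"] by (simp add: inf_min)
qed

subsection \<open>Decreasing quasi-sure limits\<close>

definition L1G_dec :: "'d::finite path measure set \<Rightarrow> real set \<Rightarrow> ('d path \<Rightarrow> ereal) set" where
  "L1G_dec PP S = {X. \<exists>Xn. (\<forall>n. Xn n \<in> L1G PP S) \<and> dec_qs PP Xn X}"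

lemma L1G_star_eq: "L1G_star PP S = LL1 PP S \<inter> L1G_dec PP S"
  unfolding L1G_star_def L1G_dec_def by blast

lemma L1G_dec_mono: "S \<subseteq> S' \<Longrightarrow> L1G_dec PP S \<subseteq> L1G_dec PP S'"
  unfolding L1G_dec_def using L1G_mono by blast

lemma dec_qs_iff: "dec_qs PP Xn X \<longleftrightarrow> qs PP (\<lambda>\<omega>. decseq (\<lambda>n. Xn n \<omega>) \<and> (\<lambda>n. Xn n \<omega>) \<longlonglongrightarrow> X \<omega>)"
  unfolding dec_qs_def decseq_Suc_iff ..

lemma L1G_dec_sum:
  assumes rep: "rep_family PP" and "finite A"
    and X: "\<And>k. k \<in> A \<Longrightarrow> X k \<in> L1G_dec PP S"
    and c: "\<And>k. k \<in> A \<Longrightarrow> c k \<ge> 0"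
    and fin: "\<And>k \<omega>. k \<in> A \<Longrightarrow> \<bar>X k \<omega>\<bar> \<noteq> \<infinity>"
  shows "(\<lambda>\<omega>. \<Sum>k\<in>A. ereal (c k) * X k \<omega>) \<in> L1G_dec PP S"
proof -
  have "\<forall>k\<in>A. \<exists>Z. (\<forall>m. Z m \<in> L1G PP S) \<and> dec_qs PP Z (X k)"
    using X unfolding L1G_dec_def by blast
  then obtain Z where Z: "\<And>k m. k \<in> A \<Longrightarrow> Z k m \<in> L1G PP S"
    and dec: "\<And>k. k \<in> A \<Longrightarrow> dec_qs PP (Z k) (X k)"
    by (metis bchoice)
  let ?Zsum = "\<lambda>m \<omega>. \<Sum>k\<in>A. ereal (c k) * Z k m \<omega>"
  have "?Zsum m \<in> L1G PP S" for m
  proof (rule L1G_sum[OF rep \<open>finite A\<close>])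
    show "(\<lambda>\<omega>. ereal (c k) * Z k m \<omega>) \<in> L1G PP S" if "k \<in> A" for k
      using L1G_cmult[OF rep Z[OF that] c[OF that]] .
  qed
  moreover have "qs PP (\<lambda>\<omega>. \<forall>k\<in>A. decseq (\<lambda>m. Z k m \<omega>) \<and> (\<lambda>m. Z k m \<omega>) \<longlonglongrightarrow> X k \<omega>)"
  proof (rule qs_countable_all[OF rep])
    show "countable A" using \<open>finite A\<close> by (rule countable_finite)
    show "qs PP (\<lambda>\<omega>. decseq (\<lambda>m. Z k m \<omega>) \<and> (\<lambda>m. Z k m \<omega>) \<longlonglongrightarrow> X k \<omega>)" if "k \<in> A" for k
      using dec[OF that] unfolding dec_qs_iff .
  qed
  then have "dec_qs PP ?Zsum (\<lambda>\<omega>. \<Sum>k\<in>A. ereal (c k) * X k \<omega>)"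
    unfolding dec_qs_iff
  proof (rule qs_mono)
    fix \<omega> assume lim: "\<forall>k\<in>A. decseq (\<lambda>m. Z k m \<omega>) \<and> (\<lambda>m. Z k m \<omega>) \<longlonglongrightarrow> X k \<omega>"
    have "?Zsum m' \<omega> \<le> ?Zsum m \<omega>" if "m \<le> m'" for m m'
    proof (rule sum_mono)
      fix k assume "k \<in> A"
      then show "ereal (c k) * Z k m' \<omega> \<le> ereal (c k) * Z k m \<omega>"
        using lim c that by (intro ereal_mult_left_mono) (auto simp: decseq_def)
    qed
    then have "decseq (\<lambda>m. ?Zsum m \<omega>)" unfolding decseq_def by blast
    let ?a = "\<lambda>k. if k \<in> A then ereal (c k) * X k \<omega> else 0"
    have "(\<lambda>m. ereal (c k) * Z k m \<omega>) \<longlonglongrightarrow> ?a k" if "k \<in> A" for k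
      using lim that by (simp add: tendsto_cmult_ereal)
    moreover have "\<bar>?a k\<bar> \<noteq> \<infinity>" for k
      using fin[of k \<omega>] by (cases "X k \<omega>") auto
    ultimately have "(\<lambda>m. ?Zsum m \<omega>) \<longlonglongrightarrow> (\<Sum>k\<in>A. ?a k)"
      by (rule tendsto_sum_ereal)
    then have "(\<lambda>m. ?Zsum m \<omega>) \<longlonglongrightarrow> (\<Sum>k\<in>A. ereal (c k) * X k \<omega>)"
      by simp
    with \<open>decseq (\<lambda>m. ?Zsum m \<omega>)\<close>
    show "decseq (\<lambda>m. ?Zsum m \<omega>) \<and> (\<lambda>m. ?Zsum m \<omega>) \<longlonglongrightarrow> (\<Sum>k\<in>A. ereal (c k) * X k \<omega>)" ..
  qed
  ultimately show ?thesis unfolding L1G_dec_def by (intro CollectI exI[of _ ?Zsum] conjI allI)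
qed

text \<open>No monotonicity of \<open>y\<close> is needed, so the Riemann sums approximating \<open>\<tau> \<and> T\<close> below
  need not decrease in \<open>n\<close>.\<close>

lemma tendsto_diagonal_INF:
  fixes z :: "nat \<Rightarrow> nat \<Rightarrow> 'a::{complete_linorder, linorder_topology}"
  assumes dec: "\<And>n. decseq (z n)" and z: "\<And>n. z n \<longlonglongrightarrow> y n"
    and above: "\<And>n. x \<le> y n" and y: "y \<longlonglongrightarrow> x"
  shows "decseq (\<lambda>m. INF n\<in>{..m}. z n m)" and "(\<lambda>m. INF n\<in>{..m}. z n m) \<longlonglongrightarrow> x"
proof -
  let ?W = "\<lambda>m. INF n\<in>{..m}. z n m"
  show W: "decseq ?W"
    unfolding decseq_def
  proof (intro allI impI)
    fix m m' :: nat assume "m \<le> m'"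
    then show "?W m' \<le> ?W m"
      using dec by (intro INF_superset_mono) (auto simp: decseq_def)
  qed
  have "?W \<longlonglongrightarrow> (INF m. ?W m)"
    using W by (rule LIMSEQ_INF)
  moreover have "(INF m. ?W m) = x"
  proof (rule antisym)
    have "(INF m. ?W m) \<le> y n" for n
    proof (rule LIMSEQ_le_const[OF z], intro exI allI impI)
      fix m assume "n \<le> m"
      have "(INF m. ?W m) \<le> ?W m" by (rule INF_lower) simp
      also have "?W m \<le> z n m" using \<open>n \<le> m\<close> by (intro INF_lower) simp
      finally show "(INF m. ?W m) \<le> z n m" .
    qed
    then show "(INF m. ?W m) \<le> x"
      by (intro LIMSEQ_le_const[OF y]) auto
    have "x \<le> z n m" for n m
      using above[of n] decseq_ge[OF dec z] by (rule order_trans)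
    then show "x \<le> (INF m. ?W m)"
      by (intro INF_greatest)
  qed
  ultimately show "?W \<longlonglongrightarrow> x" by simp
qed

lemma L1G_dec_limit_from_above:
  assumes rep: "rep_family PP" and Y: "\<And>n. Y n \<in> L1G_dec PP S"
    and lim: "qs PP (\<lambda>\<omega>. (\<forall>n. X \<omega> \<le> Y n \<omega>) \<and> (\<lambda>n. Y n \<omega>) \<longlonglongrightarrow> X \<omega>)"
  shows "X \<in> L1G_dec PP S"
proof -
  have "\<forall>n. \<exists>Z. (\<forall>m. Z m \<in> L1G PP S) \<and> dec_qs PP Z (Y n)"
    using Y unfolding L1G_dec_def by blast
  then obtain Z where Z: "\<And>n m. Z n m \<in> L1G PP S" and dec: "\<And>n. dec_qs PP (Z n) (Y n)"
    by (metis choice)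
  let ?W = "\<lambda>m \<omega>. INF n\<in>{..m}. Z n m \<omega>"
  have "?W m \<in> L1G PP S" for m
    using Z by (intro L1G_INF[OF rep]) auto
  moreover have "qs PP (\<lambda>\<omega>. \<forall>n\<in>UNIV. decseq (\<lambda>m. Z n m \<omega>) \<and> (\<lambda>m. Z n m \<omega>) \<longlonglongrightarrow> Y n \<omega>)"
    by (rule qs_countable_all[OF rep]) (use dec in \<open>simp_all add: dec_qs_iff\<close>)
  with lim have "qs PP (\<lambda>\<omega>. ((\<forall>n. X \<omega> \<le> Y n \<omega>) \<and> (\<lambda>n. Y n \<omega>) \<longlonglongrightarrow> X \<omega>) \<and>
      (\<forall>n\<in>UNIV. decseq (\<lambda>m. Z n m \<omega>) \<and> (\<lambda>m. Z n m \<omega>) \<longlonglongrightarrow> Y n \<omega>))"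
    by (rule qs_conj[OF rep])
  then have "dec_qs PP ?W X"
    unfolding dec_qs_iff
  proof (rule qs_mono)
    fix \<omega> assume "((\<forall>n. X \<omega> \<le> Y n \<omega>) \<and> (\<lambda>n. Y n \<omega>) \<longlonglongrightarrow> X \<omega>) \<and>
      (\<forall>n\<in>UNIV. decseq (\<lambda>m. Z n m \<omega>) \<and> (\<lambda>m. Z n m \<omega>) \<longlonglongrightarrow> Y n \<omega>)"
    then show "decseq (\<lambda>m. ?W m \<omega>) \<and> (\<lambda>m. ?W m \<omega>) \<longlonglongrightarrow> X \<omega>"
      using tendsto_diagonal_INF[of "\<lambda>n m. Z n m \<omega>" "\<lambda>n. Y n \<omega>" "X \<omega>"] by simp
  qed
  ultimately show ?thesis unfolding L1G_dec_def by (intro CollectI exI[of _ ?W] conjI allI)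
qed

subsection \<open>Dyadic approximation of truncated stopping times\<close>

lemma sum_grid_indicator:
  fixes x h :: real
  assumes h: "h > 0" and x0: "x \<ge> 0"
  shows "(\<Sum>k<N. (if real k * h \<le> x then 1 else 0::real)) = real (min N (nat \<lfloor>x / h\<rfloor> + 1))"
proof (induct N)
  case 0 then show ?case by simp
next
  case (Suc N)
  have "real N * h \<le> x \<longleftrightarrow> real N \<le> x / h" using h by (simp add: le_divide_eq)
  also have "\<dots> \<longleftrightarrow> int N \<le> \<lfloor>x / h\<rfloor>" by (simp add: le_floor_iff)
  also have "\<dots> \<longleftrightarrow> N < nat \<lfloor>x / h\<rfloor> + 1"
  proof -
    have "0 \<le> \<lfloor>x / h\<rfloor>" using x0 h by simp
    then show ?thesis by (auto simp: le_nat_iff[symmetric] less_Suc_eq_le)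
  qed
  finally have "real N * h \<le> x \<longleftrightarrow> N < nat \<lfloor>x / h\<rfloor> + 1" .
  with Suc show ?case by (auto simp: min_def)
qed

lemma grid_riemann_sum_bounds:
  fixes h x T :: real and N :: nat
  assumes h: "h > 0" and x: "x \<ge> 0" and NT: "real N * h = T"
  shows "min x T \<le> (\<Sum>k<N. h * (if real k * h \<le> x then 1 else 0))"
    and "(\<Sum>k<N. h * (if real k * h \<le> x then 1 else 0)) \<le> min x T + h"
proof -
  define m where "m = nat \<lfloor>x / h\<rfloor> + 1"
  have s: "(\<Sum>k<N. h * (if real k * h \<le> x then 1 else 0)) = h * real (min N m)"
    using sum_grid_indicator[OF h x, of N] by (simp add: sum_distrib_left[symmetric] m_def)
  have fl: "real_of_int \<lfloor>x / h\<rfloor> \<le> x / h" "x / h < real_of_int \<lfloor>x / h\<rfloor> + 1" by linarith+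
  have "0 \<le> \<lfloor>x / h\<rfloor>" using x h by simp
  then have rm: "real m = real_of_int \<lfloor>x / h\<rfloor> + 1" unfolding m_def by simp
  have m1: "x < h * real m"
  proof -
    have "h * (x / h) < h * real m" using fl(2) h rm by (intro mult_strict_left_mono) auto
    then show ?thesis using h by simp
  qed
  have m2: "h * real m \<le> x + h" using fl(1) h unfolding rm by (simp add: le_divide_eq distrib_left mult.commute)
  have hm: "h * real (min N m) = min T (h * real m)"
  proof (cases "N \<le> m")
    case True
    then have "h * real N \<le> h * real m" using h by (intro mult_left_mono) auto
    then show ?thesis using True NT by (simp add: min_def mult.commute)
  next
    case False
    then have "h * real m \<le> h * real N" using h by (intro mult_left_mono) auto
    then show ?thesis using False NT by (simp add: min_def mult.commute)
  qed
  show "min x T \<le> (\<Sum>k<N. h * (if real k * h \<le> x then 1 else 0))"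
    unfolding s hm using m1 by linarith
  show "(\<Sum>k<N. h * (if real k * h \<le> x then 1 else 0)) \<le> min x T + h"
    unfolding s hm using m2 h by linarith
qed

lemma min_Suc_tendsto: "(\<lambda>n. min x (real (Suc n))) \<longlonglongrightarrow> x"
proof (rule tendsto_eventually)
  show "\<forall>\<^sub>F n in sequentially. min x (real (Suc n)) = x"
    using eventually_ge_at_top[of "nat \<lceil>x\<rceil>"] by eventually_elim linarith
qed

lemma borel_measurable_star_stopping_time:
  assumes "star_stopping_time PP \<tau>"
  shows "\<tau> \<in> borel_measurable (Filt {0..})"
  unfolding borel_measurable_iff_ge
proof
  fix a :: real
  show "{\<omega> \<in> space (Filt {0..}). a \<le> \<tau> \<omega>} \<in> sets (Filt {0..})"
  proof (cases "a \<le> 0")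
    case True
    then have "{\<omega> \<in> space (Filt {0..}). a \<le> \<tau> \<omega>} = space (Filt {0..})"
      using assms unfolding star_stopping_time_def by force
    then show ?thesis using sets.top[of "Filt {0..}"] by simp
  next
    case False
    let ?I = "\<lambda>\<omega>. if a \<le> \<tau> \<omega> then (1::ereal) else 0"
    have "?I \<in> L0 {0..a}"
      using assms False unfolding star_stopping_time_def L1G_star_def LL1_def by auto
    then have "?I \<in> borel_measurable (Filt {0..})"
      using L0_mono[of "{0..a}" "{0..}"] unfolding L0_def by auto
    then have "?I -` {1} \<inter> space (Filt {0..}) \<in> sets (Filt {0..})"
      by (rule measurable_sets) simp
    moreover have "?I -` {1} \<inter> space (Filt {0..}) = {\<omega> \<in> space (Filt {0..}). a \<le> \<tau> \<omega>}"
      by (auto split: if_splits)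
    ultimately show ?thesis by simp
  qed
qed

lemma star_stopping_time_indicator_L1G_dec:
  assumes "star_stopping_time PP \<tau>" "t \<ge> 0"
  shows "(\<lambda>\<omega>. if t \<le> \<tau> \<omega> then (1::ereal) else 0) \<in> L1G_dec PP {0..}"
  using assms L1G_dec_mono[of "{0..t}" "{0..}" PP]
  unfolding star_stopping_time_def L1G_star_eq by auto

lemma min_star_stopping_time_L1G_star:
  fixes \<tau> :: "'d::finite path \<Rightarrow> real"
  assumes rep: "rep_family PP" and st: "star_stopping_time PP \<tau>" and "T > 0"
  shows "(\<lambda>\<omega>. ereal (min (\<tau> \<omega>) T)) \<in> L1G_star PP {0..}"
proof -
  have nonneg: "\<And>\<omega>. \<omega> \<in> Omega \<Longrightarrow> 0 \<le> \<tau> \<omega>"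
    using st unfolding star_stopping_time_def by blast
  define h where "h n = T / 2 ^ n" for n :: nat
  define R where "R n x = (\<Sum>k<2^n. h n * (if real k * h n \<le> x then 1 else 0))" for n x
  have h: "h n > 0" "real (2 ^ n) * h n = T" for n
    unfolding h_def using \<open>T > 0\<close> by simp_all
  have "(\<lambda>\<omega>. ereal (R n (\<tau> \<omega>))) \<in> L1G_dec PP {0..}" for n
  proof -
    have "(\<lambda>\<omega>. \<Sum>k<2^n. ereal (h n) * (if real k * h n \<le> \<tau> \<omega> then 1 else 0)) \<in> L1G_dec PP {0..}"
    proof (rule L1G_dec_sum[OF rep])
      show "(\<lambda>\<omega>. if real k * h n \<le> \<tau> \<omega> then 1 else 0) \<in> L1G_dec PP {0..}" for k
        using h(1)[of n] by (intro star_stopping_time_indicator_L1G_dec[OF st]) simp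
    qed (use h(1)[of n] in simp_all)
    moreover have "ereal (R n x) = (\<Sum>k<2^n. ereal (h n) * (if real k * h n \<le> x then 1 else 0))" for x
      unfolding R_def sum_ereal[symmetric] by (intro sum.cong) auto
    ultimately show ?thesis by simp
  qed
  moreover have "qs PP (\<lambda>\<omega>. (\<forall>n. ereal (min (\<tau> \<omega>) T) \<le> ereal (R n (\<tau> \<omega>))) \<and>
      (\<lambda>n. ereal (R n (\<tau> \<omega>))) \<longlonglongrightarrow> ereal (min (\<tau> \<omega>) T))"
  proof (rule qs_everywhere)
    fix \<omega> :: "'d path" assume "\<omega> \<in> Omega"
    note bounds = grid_riemann_sum_bounds[OF h(1) nonneg[OF \<open>\<omega> \<in> Omega\<close>] h(2), folded R_def]
    have "h \<longlonglongrightarrow> 0"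
      unfolding h_def by (rule LIMSEQ_divide_realpow_zero) simp
    then have "(\<lambda>n. min (\<tau> \<omega>) T + h n) \<longlonglongrightarrow> min (\<tau> \<omega>) T + 0"
      by (rule tendsto_add[OF tendsto_const])
    then have upper: "(\<lambda>n. min (\<tau> \<omega>) T + h n) \<longlonglongrightarrow> min (\<tau> \<omega>) T" by simp
    have "(\<lambda>n. R n (\<tau> \<omega>)) \<longlonglongrightarrow> min (\<tau> \<omega>) T"
      by (rule tendsto_sandwich[OF _ _ tendsto_const upper]) (use bounds in simp_all)
    with bounds show "(\<forall>n. ereal (min (\<tau> \<omega>) T) \<le> ereal (R n (\<tau> \<omega>))) \<and>
      (\<lambda>n. ereal (R n (\<tau> \<omega>))) \<longlonglongrightarrow> ereal (min (\<tau> \<omega>) T)"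
      unfolding ereal_less_eq lim_ereal by blast
  qed
  ultimately have "(\<lambda>\<omega>. ereal (min (\<tau> \<omega>) T)) \<in> L1G_dec PP {0..}"
    by (rule L1G_dec_limit_from_above[OF rep])
  moreover have "(\<lambda>\<omega>. ereal (min (\<tau> \<omega>) T)) \<in> L0 {0..}"
    using borel_measurable_star_stopping_time[OF st] unfolding L0_def by measurable
  moreover have "Ehat_abs PP (\<lambda>\<omega>. ereal (min (\<tau> \<omega>) T)) \<le> ennreal T"
    using nonneg \<open>T > 0\<close> by (intro Ehat_abs_le_bound[OF rep]) simp
  ultimately show ?thesis
    unfolding L1G_star_eq LL1_def by (simp add: le_less_trans)
qed

theorem proposition3p24:
  fixes PP :: "'d::finite path measure set" and \<tau> :: "'d path \<Rightarrow> real"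
  assumes "rep_family PP"
    and "star_stopping_time PP \<tau>"
  shows "(\<forall>T>0. (\<lambda>\<omega>. ereal (min (\<tau> \<omega>) T)) \<in> L1G_star PP {0..})
         \<and> (\<lambda>\<omega>. ereal (\<tau> \<omega>)) \<in> L1G_starstar PP"
proof (intro conjI allI impI)
  show trunc: "(\<lambda>\<omega>. ereal (min (\<tau> \<omega>) T)) \<in> L1G_star PP {0..}" if "T > 0" for T
    using min_star_stopping_time_L1G_star[OF assms that] .
  let ?Xn = "\<lambda>n \<omega>. ereal (min (\<tau> \<omega>) (real (Suc n)))"
  have "inc_qs PP ?Xn (\<lambda>\<omega>. ereal (\<tau> \<omega>))"
    unfolding inc_qs_def
  proof (rule qs_everywhere, intro conjI allI)
    fix \<omega> n
    have "min (\<tau> \<omega>) (real (Suc n)) \<le> min (\<tau> \<omega>) (real (Suc (Suc n)))" by simp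
    then show "?Xn n \<omega> \<le> ?Xn (Suc n) \<omega>" by (simp only: ereal_less_eq)
    show "(\<lambda>n. ?Xn n \<omega>) \<longlonglongrightarrow> ereal (\<tau> \<omega>)"
      unfolding lim_ereal by (rule min_Suc_tendsto)
  qed
  moreover have "(\<lambda>\<omega>. ereal (\<tau> \<omega>)) \<in> L0 {0..}"
    using borel_measurable_star_stopping_time[OF assms(2)] unfolding L0_def by measurable
  ultimately show "(\<lambda>\<omega>. ereal (\<tau> \<omega>)) \<in> L1G_starstar PP"
    unfolding L1G_starstar_def using trunc by (intro CollectI conjI exI[of _ ?Xn]) auto
qed

end
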